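(* Let $\alpha\in(0,1)$, let $0=t_0<t_1<\cdots$ be arbitrary time levels with $\tau_k=t_k-t_{k-1}$, and let $n\ge2$. Then (i) $a^{(n)}_{n-k-1}-a^{(n)}_{n-k}=I^{(n)}_{n-k-1}+J^{(n)}_{n-k}$ for $1\le k\le n-1$; (ii) $\frac{2(1-\alpha)}{2-\alpha}a^{(n)}_0-a^{(n)}_1=\frac{\alpha}{2-\alpha}\omega_{1-\alpha}(\tau_n)+J^{(n)}_1$.
   Context: $\omega_\beta(t):=t^{\beta-1}/\Gamma(\beta)$ for $t>0$ and $\beta\notin\{0,-1,-2,\dots\}$ (so $\omega_{-\alpha}(t)=t^{-\alpha-1}/\Gamma(-\alpha)$). $a^{(n)}_{n-k}:=\frac1{\tau_k}\int_{t_{k-1}}^{t_k}\omega_{1-\alpha}(t_n-s)\,ds$ for $1\le k\le n$; $I^{(n)}_{n-k}:=\int_{t_{k-1}}^{t_k}\frac{t-t_k}{\tau_k}\omega_{-\alpha}(t_n-t)\,dt$ for $1\le k\le n$; $J^{(n)}_{n-k}:=\int_{t_{k-1}}^{t_k}\frac{t_{k-1}-t}{\tau_k}\omega_{-\alpha}(t_n-t)\,dt$ for $1\le k\le n-1$. *)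

theory Defs
  imports "HOL-Analysis.Analysis"
begin

definition omega :: "real \<Rightarrow> real \<Rightarrow> real" where
  "omega \<beta> s = s powr (\<beta> - 1) / Gamma \<beta>"

definition tau :: "(nat \<Rightarrow> real) \<Rightarrow> nat \<Rightarrow> real" where
  "tau t k = t k - t (k - 1)"

text \<open>aL t al n k  is  a^(n)_(n-k)  (for 1 <= k <= n).\<close>
definition aL :: "(nat \<Rightarrow> real) \<Rightarrow> real \<Rightarrow> nat \<Rightarrow> nat \<Rightarrow> real" where
  "aL t \<alpha> n k = (1 / tau t k) * integral {t (k - 1)..t k} (\<lambda>s. omega (1 - \<alpha>) (t n - s))"

text \<open>IL t al n k  is  I^(n)_(n-k)  (for 1 <= k <= n).\<close>
definition IL :: "(nat \<Rightarrow> real) \<Rightarrow> real \<Rightarrow> nat \<Rightarrow> nat \<Rightarrow> real" where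
  "IL t \<alpha> n k = integral {t (k - 1)..t k}
      (\<lambda>s. (s - t k) / tau t k * omega (- \<alpha>) (t n - s))"

text \<open>JL t al n k  is  J^(n)_(n-k)  (for 1 <= k <= n-1).\<close>
definition JL :: "(nat \<Rightarrow> real) \<Rightarrow> real \<Rightarrow> nat \<Rightarrow> nat \<Rightarrow> real" where
  "JL t \<alpha> n k = integral {t (k - 1)..t k}
      (\<lambda>s. (t (k - 1) - s) / tau t k * omega (- \<alpha>) (t n - s))"

end

theory Submission
  imports Defs
begin

(* With W s = \<omega>_{1-\<alpha>}(t_n - s) and \<Omega> s = \<omega>_{2-\<alpha>}(t_n - s) one has \<Omega>' = -W and
   W' = -\<omega>_{-\<alpha>}(t_n - s), because \<omega>_\<beta>' = \<omega>_{\<beta>-1}. Hence a^(n)_{n-k} is the divided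
   difference (\<Omega> t_{k-1} - \<Omega> t_k) / \<tau>_k, and integrating by parts gives
   I^(n)_{n-k} = a^(n)_{n-k} - W t_{k-1} and J^(n)_{n-k} = W t_k - a^(n)_{n-k}, so (i) telescopes.
   For (ii), \<Omega> t_n = 0 and x \<omega>_{1-\<alpha>}(x) = (1 - \<alpha>) \<omega>_{2-\<alpha>}(x) give a^(n)_0 = W t_{n-1} / (1 - \<alpha>). *)

lemma omega_conv_rGamma: "omega \<beta> x = x powr (\<beta> - 1) * rGamma \<beta>"
  by (simp add: omega_def rGamma_inverse_Gamma divide_inverse)

lemma omega_0 [simp]: "omega \<beta> 0 = 0"
  by (simp add: omega_def)

lemma has_real_derivative_omega:
  assumes "0 < x"
  shows "(omega \<beta> has_real_derivative omega (\<beta> - 1) x) (at x)"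
proof -
  have "(omega \<beta> has_real_derivative (\<beta> - 1) * x powr (\<beta> - 1 - 1) * rGamma \<beta>) (at x)"
    unfolding omega_conv_rGamma[abs_def] using assms
    by (auto intro!: derivative_eq_intros)
  moreover have "(\<beta> - 1) * x powr (\<beta> - 1 - 1) * rGamma \<beta> = omega (\<beta> - 1) x"
    using rGamma_plus1[of "\<beta> - 1"] by (simp add: omega_conv_rGamma)
  ultimately show ?thesis
    by simp
qed

(* No condition on \<beta>: at a pole of Gamma both sides vanish, since Gamma is 0 there. *)
lemma mult_omega:
  assumes "0 \<le> x"
  shows "x * omega \<beta> x = \<beta> * omega (\<beta> + 1) x"
proof -
  have "x * omega \<beta> x = x powr \<beta> * rGamma \<beta>"
    using powr_mult_base[OF assms, of "\<beta> - 1"] by (simp add: omega_conv_rGamma)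
  also have "\<dots> = \<beta> * omega (\<beta> + 1) x"
    using rGamma_plus1[of \<beta>] by (simp add: omega_conv_rGamma)
  finally show ?thesis .
qed

lemma has_integral_omega_reflected:
  assumes "a \<le> b" "b \<le> T" "b < T \<or> 1 < \<beta>"
  shows "((\<lambda>s. omega (\<beta> - 1) (T - s)) has_integral omega \<beta> (T - a) - omega \<beta> (T - b)) {a..b}"
proof -
  have "((\<lambda>s. omega (\<beta> - 1) (T - s)) has_integral
          (- omega \<beta> (T - b)) - (- omega \<beta> (T - a))) {a..b}"
  proof (rule fundamental_theorem_of_calculus_interior)
    show "a \<le> b" by fact
    show "continuous_on {a..b} (\<lambda>s. - omega \<beta> (T - s))"
      unfolding omega_conv_rGamma using assms
      by (intro continuous_intros continuous_on_powr') auto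
    fix s assume "s \<in> {a<..<b}"
    then have "0 < T - s" using assms by auto
    then show "((\<lambda>s. - omega \<beta> (T - s)) has_vector_derivative omega (\<beta> - 1) (T - s)) (at s)"
      unfolding has_real_derivative_iff_has_vector_derivative[symmetric]
      by (auto intro!: derivative_eq_intros DERIV_chain2[OF has_real_derivative_omega])
  qed
  then show ?thesis by simp
qed

lemma has_integral_linear_omega_reflected:
  assumes "a \<le> b" "b \<le> T" "b < T \<or> c = T \<and> 0 < \<beta>"
  shows "((\<lambda>s. (s - c) * omega (\<beta> - 1) (T - s)) has_integral
           omega (\<beta> + 1) (T - a) - omega (\<beta> + 1) (T - b)
           + (a - c) * omega \<beta> (T - a) - (b - c) * omega \<beta> (T - b)) {a..b}"
proof -
  \<comment> \<open>Split s - c = (T - c) - (T - s): the second part is less singular by \<open>mult_omega\<close>,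
      and the first vanishes when c = T, which is what allows b = T.\<close>
  have kernel: "((\<lambda>s. omega \<beta> (T - s)) has_integral
      omega (\<beta> + 1) (T - a) - omega (\<beta> + 1) (T - b)) {a..b}"
    using has_integral_omega_reflected[of a b T "\<beta> + 1"] assms by auto
  have scaled: "((\<lambda>s. (T - c) * omega (\<beta> - 1) (T - s)) has_integral
      (T - c) * (omega \<beta> (T - a) - omega \<beta> (T - b))) {a..b}"
  proof (cases "c = T")
    case False
    with assms show ?thesis
      by (intro has_integral_mult_right has_integral_omega_reflected) auto
  qed simp
  have "((\<lambda>s. (T - c) * omega (\<beta> - 1) (T - s) - (\<beta> - 1) * omega \<beta> (T - s)) has_integral
      (T - c) * (omega \<beta> (T - a) - omega \<beta> (T - b))
      - (\<beta> - 1) * (omega (\<beta> + 1) (T - a) - omega (\<beta> + 1) (T - b))) {a..b}"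
    by (rule has_integral_diff[OF scaled has_integral_mult_right[OF kernel]])
  then have "((\<lambda>s. (s - c) * omega (\<beta> - 1) (T - s)) has_integral
      (T - c) * (omega \<beta> (T - a) - omega \<beta> (T - b))
      - (\<beta> - 1) * (omega (\<beta> + 1) (T - a) - omega (\<beta> + 1) (T - b))) {a..b}"
  proof (rule has_integral_eq[rotated])
    fix s assume "s \<in> {a..b}"
    then show "(T - c) * omega (\<beta> - 1) (T - s) - (\<beta> - 1) * omega \<beta> (T - s)
        = (s - c) * omega (\<beta> - 1) (T - s)"
      using assms mult_omega[of "T - s" "\<beta> - 1"] by (simp add: algebra_simps)
  qed
  moreover have "(T - a) * omega \<beta> (T - a) = \<beta> * omega (\<beta> + 1) (T - a)"
    "(T - b) * omega \<beta> (T - b) = \<beta> * omega (\<beta> + 1) (T - b)"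
    using assms by (simp_all add: mult_omega)
  then have "(T - c) * (omega \<beta> (T - a) - omega \<beta> (T - b))
      - (\<beta> - 1) * (omega (\<beta> + 1) (T - a) - omega (\<beta> + 1) (T - b))
    = omega (\<beta> + 1) (T - a) - omega (\<beta> + 1) (T - b)
      + (a - c) * omega \<beta> (T - a) - (b - c) * omega \<beta> (T - b)"
    by (simp add: left_diff_distrib right_diff_distrib)
  ultimately show ?thesis
    by simp
qed

lemma aL_eq_divided_difference:
  assumes "\<alpha> < 1" "strict_mono t" "1 \<le> j" "j \<le> n"
  shows "aL t \<alpha> n j = (omega (2 - \<alpha>) (t n - t (j - 1)) - omega (2 - \<alpha>) (t n - t j)) / tau t j"
proof -
  have "t (j - 1) \<le> t j" "t j \<le> t n"
    using assms by (simp_all add: strict_mono_less_eq)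
  from has_integral_omega_reflected[OF this, of "2 - \<alpha>"] assms(1)
  show ?thesis
    unfolding aL_def by (simp add: integral_unique)
qed

lemma IL_eq_aL_minus_omega:
  assumes "\<alpha> < 1" "strict_mono t" "1 \<le> j" "j \<le> n"
  shows "IL t \<alpha> n j = aL t \<alpha> n j - omega (1 - \<alpha>) (t n - t (j - 1))"
proof -
  define a b T where "a = t (j - 1)" and "b = t j" and "T = t n"
  have "a < b" "b \<le> T"
    using assms by (auto simp: a_def b_def T_def strict_mono_less_eq intro: strict_monoD)
  then have "b < T \<or> b = T \<and> 0 < 1 - \<alpha>"
    using assms(1) by auto
  from has_integral_linear_omega_reflected[OF _ \<open>b \<le> T\<close> this] \<open>a < b\<close>
  have "((\<lambda>s. (s - b) * omega (- \<alpha>) (T - s)) has_integral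
      omega (2 - \<alpha>) (T - a) - omega (2 - \<alpha>) (T - b) + (a - b) * omega (1 - \<alpha>) (T - a)) {a..b}"
    by simp
  then have "IL t \<alpha> n j = (omega (2 - \<alpha>) (T - a) - omega (2 - \<alpha>) (T - b)
      + (a - b) * omega (1 - \<alpha>) (T - a)) / (b - a)"
    unfolding IL_def tau_def a_def[symmetric] b_def[symmetric] T_def[symmetric]
    by (simp add: integral_unique)
  with \<open>a < b\<close> show ?thesis
    unfolding aL_eq_divided_difference[OF assms] tau_def a_def[symmetric] b_def[symmetric] T_def[symmetric]
    by (simp add: field_simps)
qed

lemma JL_eq_omega_minus_aL:
  assumes "\<alpha> < 1" "strict_mono t" "1 \<le> j" "j < n"
  shows "JL t \<alpha> n j = omega (1 - \<alpha>) (t n - t j) - aL t \<alpha> n j"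
proof -
  define a b T where "a = t (j - 1)" and "b = t j" and "T = t n"
  have "a < b" "b < T"
    using assms(2-4) by (auto simp: a_def b_def T_def intro: strict_monoD)
  then have "((\<lambda>s. (s - a) * omega (- \<alpha>) (T - s)) has_integral
      omega (2 - \<alpha>) (T - a) - omega (2 - \<alpha>) (T - b) - (b - a) * omega (1 - \<alpha>) (T - b)) {a..b}"
    using has_integral_linear_omega_reflected[of a b T a "1 - \<alpha>"] by simp
  then have "((\<lambda>s. (a - s) * omega (- \<alpha>) (T - s)) has_integral
      - (omega (2 - \<alpha>) (T - a) - omega (2 - \<alpha>) (T - b) - (b - a) * omega (1 - \<alpha>) (T - b))) {a..b}"
    by (rule has_integral_eq[rotated, OF has_integral_neg]) (simp add: algebra_simps)
  then have "JL t \<alpha> n j = - (omega (2 - \<alpha>) (T - a) - omega (2 - \<alpha>) (T - b)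
      - (b - a) * omega (1 - \<alpha>) (T - b)) / (b - a)"
    unfolding JL_def tau_def a_def[symmetric] b_def[symmetric] T_def[symmetric]
    by (simp add: integral_unique)
  with \<open>a < b\<close> show ?thesis
    unfolding aL_eq_divided_difference[OF assms(1-3) less_imp_le[OF assms(4)]]
      tau_def a_def[symmetric] b_def[symmetric] T_def[symmetric]
    by (simp add: diff_divide_distrib)
qed

lemma aL_diagonal:
  assumes "\<alpha> < 1" "strict_mono t" "1 \<le> n"
  shows "aL t \<alpha> n n = omega (1 - \<alpha>) (tau t n) / (1 - \<alpha>)"
proof -
  have "0 < tau t n"
    using assms(2,3) by (simp add: tau_def strict_monoD)
  then have "tau t n * omega (1 - \<alpha>) (tau t n) = (1 - \<alpha>) * omega (2 - \<alpha>) (tau t n)"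
    using mult_omega[of "tau t n" "1 - \<alpha>"] by simp
  with \<open>0 < tau t n\<close> assms(1) show ?thesis
    unfolding aL_eq_divided_difference[OF assms(1,2,3) order_refl] by (simp add: tau_def field_simps)
qed

theorem lemma4p1:
  fixes t :: "nat \<Rightarrow> real" and \<alpha> :: real and n :: nat
  assumes "0 < \<alpha>" and "\<alpha> < 1"
    and "t 0 = 0" and "strict_mono t"
    and "2 \<le> n"
  shows "(\<forall>k. 1 \<le> k \<and> k \<le> n - 1 \<longrightarrow>
            aL t \<alpha> n (k + 1) - aL t \<alpha> n k = IL t \<alpha> n (k + 1) + JL t \<alpha> n k)
       \<and> 2 * (1 - \<alpha>) / (2 - \<alpha>) * aL t \<alpha> n n - aL t \<alpha> n (n - 1)
           = \<alpha> / (2 - \<alpha>) * omega (1 - \<alpha>) (tau t n) + JL t \<alpha> n (n - 1)"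
proof (intro conjI allI impI)
  fix k assume "1 \<le> k \<and> k \<le> n - 1"
  then have "1 \<le> k" "k < n"
    using assms(5) by auto
  with assms(2,4) show "aL t \<alpha> n (k + 1) - aL t \<alpha> n k = IL t \<alpha> n (k + 1) + JL t \<alpha> n k"
    using IL_eq_aL_minus_omega[of \<alpha> t "k + 1" n] JL_eq_omega_minus_aL[of \<alpha> t k n] by simp
next
  have last: "aL t \<alpha> n n = omega (1 - \<alpha>) (tau t n) / (1 - \<alpha>)"
    using assms by (intro aL_diagonal) auto
  have J: "JL t \<alpha> n (n - 1) = omega (1 - \<alpha>) (tau t n) - aL t \<alpha> n (n - 1)"
    using assms JL_eq_omega_minus_aL[of \<alpha> t "n - 1" n] by (simp add: tau_def)
  show "2 * (1 - \<alpha>) / (2 - \<alpha>) * aL t \<alpha> n n - aL t \<alpha> n (n - 1)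
      = \<alpha> / (2 - \<alpha>) * omega (1 - \<alpha>) (tau t n) + JL t \<alpha> n (n - 1)"
    unfolding last J using assms(2) by (simp add: divide_simps) (simp add: algebra_simps)
qed

end
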